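(* Let $\Phi_1,\Phi_2$ be quantum channels on $\mathcal D_n$ and let $|\psi_+\rangle\in\mathbb C^n\otimes\mathbb C^n$ be any maximally entangled state, with $\Phi_1$ acting on the first and $\Phi_2$ on the second factor. Then $$-\log\Big(1-\big|e^{-S_2^{\mathrm{map}}(\Phi_1)}-e^{-S_2^{\mathrm{map}}(\Phi_2)}\big|\Big)\;\le\; S_2\big((\Phi_1\otimes\Phi_2)(|\psi_+\rangle\langle\psi_+|)\big).$$
   Context: A quantum channel on $\mathcal D_n$ ($n\times n$ density matrices) is a linear, completely positive, trace-preserving map. A maximally entangled state is a unit vector in $\mathbb C^n\otimes\mathbb C^n$ whose reduced density matrices equal $\frac1n\mathbb 1$. The Jamiołkowski state of $\Phi$ is $\sigma^\Phi=(\Phi\otimes\mathrm{id})(|\phi_+\rangle\langle\phi_+|)$ with $|\phi_+\rangle=\frac1{\sqrt n}\sum_i|i\rangle\otimes|i\rangle$. The Renyi-2 entropy is $S_2(\rho)=-\log\operatorname{tr}\rho^2$ and $S_2^{\mathrm{map}}(\Phi)=S_2(\sigma^\Phi)$, so $e^{-S_2^{\mathrm{map}}(\Phi)}=\operatorname{tr}(\sigma^\Phi)^2$. *)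

theory Defs
  imports Complex_Main "Jordan_Normal_Form.Matrix"
begin

text \<open>Matrices are complex matrices from Jordan_Normal_Form. A map on the
  n x n matrices is modelled as a function complex mat to complex mat whose
  behaviour is only constrained on carrier_mat n n.\<close>

definition ctrace :: "complex mat \<Rightarrow> complex" where
  "ctrace A = (\<Sum>i<dim_row A. A $$ (i, i))"

definition psd :: "complex mat \<Rightarrow> bool" where
  "psd A \<longleftrightarrow> A \<in> carrier_mat (dim_row A) (dim_row A) \<and>
     (\<forall>v \<in> carrier_vec (dim_row A).
        \<exists>r::real. r \<ge> 0 \<and>
          (\<Sum>i<dim_row A. \<Sum>j<dim_row A. cnj (v $ i) * A $$ (i, j) * v $ j) = complex_of_real r)"

text \<open>Bipartite index convention: C^n (x) C^m, basis index a*m + b with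
  a < n (first factor) and b < m (second factor).\<close>

text \<open>(Phi (x) id_m) applied to an (n*m) x (n*m) matrix, Phi acting on the
  first factor C^n.\<close>
definition apply_first :: "(complex mat \<Rightarrow> complex mat) \<Rightarrow> nat \<Rightarrow> nat \<Rightarrow> complex mat \<Rightarrow> complex mat" where
  "apply_first \<Phi> n m X = mat (n * m) (n * m) (\<lambda>(i, j).
     \<Phi> (mat n n (\<lambda>(a, a'). X $$ (a * m + i mod m, a' * m + j mod m))) $$ (i div m, j div m))"

text \<open>(id_n (x) Phi) applied to an (n*m) x (n*m) matrix, Phi acting on the
  second factor C^m.\<close>
definition apply_second :: "(complex mat \<Rightarrow> complex mat) \<Rightarrow> nat \<Rightarrow> nat \<Rightarrow> complex mat \<Rightarrow> complex mat" where
  "apply_second \<Phi> n m X = mat (n * m) (n * m) (\<lambda>(i, j).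
     \<Phi> (mat m m (\<lambda>(b, b'). X $$ ((i div m) * m + b, (j div m) * m + b'))) $$ (i mod m, j mod m))"

definition tensor_channel :: "(complex mat \<Rightarrow> complex mat) \<Rightarrow> (complex mat \<Rightarrow> complex mat) \<Rightarrow> nat \<Rightarrow> complex mat \<Rightarrow> complex mat" where
  "tensor_channel \<Phi>1 \<Phi>2 n X = apply_first \<Phi>1 n n (apply_second \<Phi>2 n n X)"

definition quantum_channel :: "nat \<Rightarrow> (complex mat \<Rightarrow> complex mat) \<Rightarrow> bool" where
  "quantum_channel n \<Phi> \<longleftrightarrow>
     (\<forall>A \<in> carrier_mat n n. \<Phi> A \<in> carrier_mat n n) \<and>
     (\<forall>A \<in> carrier_mat n n. \<forall>B \<in> carrier_mat n n. \<Phi> (A + B) = \<Phi> A + \<Phi> B) \<and>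
     (\<forall>c. \<forall>A \<in> carrier_mat n n. \<Phi> (c \<cdot>\<^sub>m A) = c \<cdot>\<^sub>m \<Phi> A) \<and>
     (\<forall>A \<in> carrier_mat n n. ctrace (\<Phi> A) = ctrace A) \<and>
     (\<forall>k. \<forall>X \<in> carrier_mat (n * k) (n * k). psd X \<longrightarrow> psd (apply_first \<Phi> n k X))"

definition outer :: "complex vec \<Rightarrow> complex mat" where
  "outer v = mat (dim_vec v) (dim_vec v) (\<lambda>(i, j). v $ i * cnj (v $ j))"

definition unit_vector :: "complex vec \<Rightarrow> bool" where
  "unit_vector v \<longleftrightarrow> (\<Sum>i<dim_vec v. (cmod (v $ i))\<^sup>2) = 1"

definition ptrace_second :: "nat \<Rightarrow> nat \<Rightarrow> complex mat \<Rightarrow> complex mat" where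
  "ptrace_second n m X = mat n n (\<lambda>(a, a'). \<Sum>b<m. X $$ (a * m + b, a' * m + b))"

definition ptrace_first :: "nat \<Rightarrow> nat \<Rightarrow> complex mat \<Rightarrow> complex mat" where
  "ptrace_first n m X = mat m m (\<lambda>(b, b'). \<Sum>a<n. X $$ (a * m + b, a * m + b'))"

definition maximally_entangled :: "nat \<Rightarrow> complex vec \<Rightarrow> bool" where
  "maximally_entangled n \<psi> \<longleftrightarrow> \<psi> \<in> carrier_vec (n * n) \<and> unit_vector \<psi> \<and>
     ptrace_second n n (outer \<psi>) = (1 / of_nat n) \<cdot>\<^sub>m 1\<^sub>m n \<and>
     ptrace_first n n (outer \<psi>) = (1 / of_nat n) \<cdot>\<^sub>m 1\<^sub>m n"

definition phi_plus :: "nat \<Rightarrow> complex vec" where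
  "phi_plus n = vec (n * n) (\<lambda>i. if i div n = i mod n then complex_of_real (1 / sqrt (real n)) else 0)"

definition jamiolkowski :: "nat \<Rightarrow> (complex mat \<Rightarrow> complex mat) \<Rightarrow> complex mat" where
  "jamiolkowski n \<Phi> = apply_first \<Phi> n n (outer (phi_plus n))"

text \<open>Renyi-2 entropy S_2(rho) = - log tr rho^2 (natural log; tr rho^2 is real
  for Hermitian rho).\<close>
definition renyi2 :: "complex mat \<Rightarrow> real" where
  "renyi2 \<rho> = - ln (Re (ctrace (\<rho> * \<rho>)))"

definition renyi2_map :: "nat \<Rightarrow> (complex mat \<Rightarrow> complex mat) \<Rightarrow> real" where
  "renyi2_map n \<Phi> = renyi2 (jamiolkowski n \<Phi>)"

end

theory Submission
  imports Defs
begin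

(* Write the channels in Kraus form, Phi1(X) = sum_r K_r X K_r^* and
   Phi2(X) = sum_s L_s X L_s^*. The output state rho = (Phi1 (x) Phi2)(|psi><psi|) is then
   the reduced state of the pure tripartite vector W(I, r, s) = ((K_r (x) L_s) psi)_I on
   output space (x) Kraus labels of Phi1 (x) Kraus labels of Phi2. Because psi is
   maximally entangled, tracing W over the output space and one Kraus label leaves the
   matrix of normalised overlaps (1/n) tr(K_r'^* K_r) of the other channel, which has the
   same purity as its Jamiolkowski state. Audenaert's inequality for tripartite pure
   states, tr rho_A^2 + tr rho_B^2 <= 1 + tr rho_C^2, applied in both orders, gives
   tr rho^2 <= 1 - |tr (sigma^Phi1)^2 - tr (sigma^Phi2)^2|, and taking -ln proves the claim. *)

definition quad_form :: "(nat \<Rightarrow> nat \<Rightarrow> complex) \<Rightarrow> nat \<Rightarrow> (nat \<Rightarrow> complex) \<Rightarrow> complex" where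
  "quad_form A N v = (\<Sum>i<N. \<Sum>j<N. cnj (v i) * A i j * v j)"

definition psd_kernel :: "(nat \<Rightarrow> nat \<Rightarrow> complex) \<Rightarrow> nat \<Rightarrow> bool" where
  "psd_kernel A N \<longleftrightarrow> (\<forall>v. \<exists>r\<ge>0. quad_form A N v = complex_of_real r)"

lemma sum_delta_right: "k < (N::nat) \<Longrightarrow> (\<Sum>j<N. f j * (if j = k then 1 else 0)) = (f k :: complex)"
  by (simp add: if_distrib[of "(*) _"] cong: if_cong)

lemma quad_form_add_point:
  assumes k: "k < N"
  shows "quad_form A N (\<lambda>i. v i + (if i = k then t else 0)) = quad_form A N v
     + cnj t * (\<Sum>j<N. A k j * v j) + t * (\<Sum>i<N. cnj (v i) * A i k) + cnj t * t * A k k"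
proof -
  define d where "d = (\<lambda>i::nat. if i = k then 1 else (0::complex))"
  have e: "cnj (v i + (if i = k then t else 0)) * A i j * (v j + (if j = k then t else 0))
     = cnj (v i) * A i j * v j + (cnj (v i) * A i j * t) * d j + (cnj t * A i j * v j) * d i
       + ((cnj t * A i j * t) * d j) * d i" for i j
    unfolding d_def by (auto simp: algebra_simps)
  have "quad_form A N (\<lambda>i. v i + (if i = k then t else 0)) = quad_form A N v
     + (\<Sum>i<N. \<Sum>j<N. (cnj (v i) * A i j * t) * d j)
     + (\<Sum>i<N. (\<Sum>j<N. cnj t * A i j * v j) * d i)
     + (\<Sum>i<N. (\<Sum>j<N. (cnj t * A i j * t) * d j) * d i)"
    unfolding quad_form_def e by (simp add: sum.distrib sum_distrib_right)
  also have "\<dots> = quad_form A N v + (\<Sum>i<N. cnj (v i) * A i k * t) + (\<Sum>j<N. cnj t * A k j * v j)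
     + cnj t * A k k * t"
    unfolding d_def using k by (simp add: sum_delta_right)
  finally show ?thesis by (simp add: sum_distrib_left algebra_simps)
qed

text \<open>Quadratic forms at vectors supported on one or two coordinates; testing positivity on
  these recovers the entries of A.\<close>

lemma quad_form_point:
  assumes "k < N"
  shows "quad_form A N (\<lambda>i. if i = k then t else 0) = cnj t * t * A k k"
  using quad_form_add_point[OF assms, of A "\<lambda>_. 0" t] by (simp add: quad_form_def)

lemma quad_form_two:
  assumes i: "i < N" and j: "j < N" and ij: "i \<noteq> j"
  shows "quad_form A N (\<lambda>l. (if l = i then a else 0) + (if l = j then b else 0))
    = cnj a * a * A i i + cnj b * (A j i * a) + b * (cnj a * A i j) + cnj b * b * A j j"
proof -
  have s1: "(\<Sum>l<N. A j l * (if l = i then a else 0)) = A j i * a"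
    using i by (simp add: if_distrib[of "(*) _"] cong: if_cong)
  have s2: "(\<Sum>l<N. cnj (if l = i then a else 0) * A l j) = cnj a * A i j"
    using i by (simp add: if_distrib[of cnj] if_distrib[of "\<lambda>x. x * _"] cong: if_cong)
  show ?thesis using quad_form_add_point[OF j, of A "\<lambda>l. if l = i then a else 0" b]
    using quad_form_point[OF i, of A a] s1 s2 by simp
qed

lemma psd_kernelD: "psd_kernel A N \<Longrightarrow> Im (quad_form A N v) = 0 \<and> 0 \<le> Re (quad_form A N v)"
  unfolding psd_kernel_def by (metis Im_complex_of_real Re_complex_of_real)

lemma psd_kernel_diag:
  assumes "psd_kernel A N" "k < N"
  shows "Im (A k k) = 0" "0 \<le> Re (A k k)"
  using psd_kernelD[OF assms(1), of "\<lambda>i. if i = k then 1 else 0"] quad_form_point[OF assms(2), of A 1]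
  by auto

lemma psd_kernel_herm:
  assumes P: "psd_kernel A N" and i: "i < N" and j: "j < N"
  shows "A j i = cnj (A i j)"
proof (cases "i = j")
  case True
  then show ?thesis using psd_kernel_diag[OF P i] by (simp add: complex_eq_iff)
next
  case False
  have "Im (quad_form A N (\<lambda>l. (if l = i then 1 else 0) + (if l = j then 1 else 0))) = 0"
    using psd_kernelD[OF P] by blast
  hence h1: "Im (A j i) + Im (A i j) = 0"
    using quad_form_two[OF i j False, of A 1 1] psd_kernel_diag[OF P i] psd_kernel_diag[OF P j] by simp
  have "Im (quad_form A N (\<lambda>l. (if l = i then 1 else 0) + (if l = j then \<i> else 0))) = 0"
    using psd_kernelD[OF P] by blast
  hence h2: "Re (A i j) - Re (A j i) = 0"
    using quad_form_two[OF i j False, of A 1 \<i>] psd_kernel_diag[OF P i] psd_kernel_diag[OF P j] by simp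
  show ?thesis using h1 h2 by (simp add: complex_eq_iff)
qed

lemma psd_kernel_zero_col:
  assumes P: "psd_kernel A N" and k: "k < N" and i: "i < N" and akk: "A k k = 0"
  shows "A i k = 0"
proof (rule ccontr)
  assume nz: "A i k \<noteq> 0"
  hence ik: "i \<noteq> k" using akk by auto
  define z where "z = A i k"
  define c where "c = (cmod z)^2"
  have c: "c > 0" using nz unfolding c_def z_def by simp
  have zc: "z * cnj z = complex_of_real c" unfolding c_def by (simp add: complex_mult_cnj cmod_power2)
  have herm: "A k i = cnj z" using psd_kernel_herm[OF P i k] z_def by simp
  define s where "s = (Re (A i i) + 1) / (2 * c)"
  define t where "t = - complex_of_real s * cnj z"
  have "0 \<le> Re (quad_form A N (\<lambda>l. (if l = i then 1 else 0) + (if l = k then t else 0)))"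
    using psd_kernelD[OF P] by blast
  also have "quad_form A N (\<lambda>l. (if l = i then 1 else 0) + (if l = k then t else 0))
     = A i i + (cnj t * cnj z + t * z)"
    using quad_form_two[OF i k ik, of A 1 t] herm akk z_def by simp
  also have "cnj t * cnj z + t * z = - 2 * complex_of_real s * (z * cnj z)"
    unfolding t_def by (simp add: algebra_simps)
  also have "Re (A i i + - 2 * complex_of_real s * (z * cnj z)) = Re (A i i) - 2 * s * c"
    unfolding zc by simp
  also have "\<dots> = -1" unfolding s_def using c by (simp add: field_simps)
  finally show False by simp
qed

text \<open>Subtracting the rank-one kernel u u^* built from the k-th column (Schur complement)
  preserves positive semidefiniteness.\<close>

lemma psd_kernel_rank_one_step:
  assumes P: "psd_kernel A N" and k: "k < N" and a: "A k k \<noteq> 0"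
  defines "u \<equiv> \<lambda>i. A i k / complex_of_real (sqrt (Re (A k k)))"
  shows "psd_kernel (\<lambda>i j. A i j - u i * cnj (u j)) N"
proof -
  define sa where "sa = sqrt (Re (A k k))"
  have im: "Im (A k k) = 0" and re: "0 \<le> Re (A k k)" using psd_kernel_diag[OF P k] by auto
  have "Re (A k k) > 0" using im re a by (metis complex_eqI less_eq_real_def zero_complex.simps)
  hence sa: "sa > 0" unfolding sa_def by simp
  have akk: "A k k = complex_of_real sa * complex_of_real sa"
    using im re unfolding sa_def by (simp add: complex_eq_iff)
  show ?thesis unfolding psd_kernel_def
  proof
    fix v
    define w where "w = (\<Sum>j<N. cnj (u j) * v j)"
    define t where "t = - w / complex_of_real sa"
    have cw: "cnj w = (\<Sum>i<N. cnj (v i) * u i)" unfolding w_def by (simp add: mult.commute)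
    have "quad_form (\<lambda>i j. A i j - u i * cnj (u j)) N v = quad_form A N v
        - (\<Sum>i<N. \<Sum>j<N. (cnj (v i) * u i) * (cnj (u j) * v j))"
      unfolding quad_form_def by (simp add: algebra_simps sum_subtractf)
    also have "(\<Sum>i<N. \<Sum>j<N. (cnj (v i) * u i) * (cnj (u j) * v j)) = cnj w * w"
      unfolding cw w_def by (simp add: sum_product mult.commute)
    finally have q1: "quad_form (\<lambda>i j. A i j - u i * cnj (u j)) N v = quad_form A N v - cnj w * w" .
    have s1: "(\<Sum>j<N. A k j * v j) = complex_of_real sa * w"
      unfolding w_def sum_distrib_left
      by (rule sum.cong, simp, use sa in \<open>simp add: u_def sa_def[symmetric] psd_kernel_herm[OF P _ k]\<close>)
    have s2: "(\<Sum>i<N. cnj (v i) * A i k) = complex_of_real sa * cnj w"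
      unfolding cw sum_distrib_left
      by (rule sum.cong, simp, use sa in \<open>simp add: u_def sa_def[symmetric]\<close>)
    have "quad_form A N (\<lambda>i. v i + (if i = k then t else 0)) = quad_form A N v - cnj w * w"
      unfolding quad_form_add_point[OF k] s1 s2 akk t_def using sa by (simp add: field_simps)
    moreover obtain r where "r \<ge> 0" "quad_form A N (\<lambda>i. v i + (if i = k then t else 0)) = complex_of_real r"
      using P unfolding psd_kernel_def by blast
    ultimately show "\<exists>r\<ge>0. quad_form (\<lambda>i j. A i j - u i * cnj (u j)) N v = complex_of_real r"
      using q1 by auto
  qed
qed

lemma psd_kernel_peel:
  assumes P: "psd_kernel A N" and k: "k < N"
    and Z: "\<forall>i<N. \<forall>j<N. (i < k \<or> j < k) \<longrightarrow> A i j = 0"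
  obtains u where "psd_kernel (\<lambda>i j. A i j - u i * cnj (u j)) N"
    and "\<forall>i<N. \<forall>j<N. (i < Suc k \<or> j < Suc k) \<longrightarrow> A i j - u i * cnj (u j) = 0"
proof (cases "A k k = 0")
  case True
  have "A i k = 0" "A k i = 0" if "i < N" for i
    using psd_kernel_zero_col[OF P k that True] psd_kernel_herm[OF P that k] by auto
  with Z have "\<forall>i<N. \<forall>j<N. (i < Suc k \<or> j < Suc k) \<longrightarrow> A i j = 0"
    using less_Suc_eq by auto
  then show ?thesis using P by (intro that[of "\<lambda>_. 0"]) auto
next
  case False
  define sa where "sa = sqrt (Re (A k k))"
  define u where "u = (\<lambda>i. A i k / complex_of_real sa)"
  have im: "Im (A k k) = 0" and re: "0 \<le> Re (A k k)" using psd_kernel_diag[OF P k] by auto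
  have "Re (A k k) > 0" using im re False by (metis complex_eqI less_eq_real_def zero_complex.simps)
  hence sa: "sa > 0" unfolding sa_def by simp
  have akk: "A k k = complex_of_real sa * complex_of_real sa"
    using im re unfolding sa_def by (simp add: complex_eq_iff)
  have row: "A k j - u k * cnj (u j) = 0" if "j < N" for j
    using sa psd_kernel_herm[OF P that k] unfolding u_def akk by (simp add: field_simps)
  have col: "A i k - u i * cnj (u k) = 0" for i
    using sa unfolding u_def akk by (simp add: field_simps)
  have "u i = 0" if "i < N" "i < k" for i
    using Z k that unfolding u_def by simp
  with Z row col have "\<forall>i<N. \<forall>j<N. (i < Suc k \<or> j < Suc k) \<longrightarrow> A i j - u i * cnj (u j) = 0"
    unfolding less_Suc_eq by auto
  then show ?thesis
    using psd_kernel_rank_one_step[OF P k False] by (intro that[of u]) (auto simp: u_def sa_def)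
qed

text \<open>Every positive semidefinite kernel is a Gram kernel (finite Cholesky decomposition).\<close>

lemma psd_kernel_gram_from:
  assumes "N - k = d" "psd_kernel A N" "\<forall>i<N. \<forall>j<N. (i < k \<or> j < k) \<longrightarrow> A i j = 0"
  shows "\<exists>(m::nat) u. \<forall>i<N. \<forall>j<N. A i j = (\<Sum>r<m. u r i * cnj (u r j))"
  using assms
proof (induction d arbitrary: A k)
  case 0
  then have "\<forall>i<N. \<forall>j<N. A i j = 0" by auto
  then show ?case by (intro exI[of _ "0::nat"] exI[of _ "\<lambda>_ _. 0"]) simp
next
  case (Suc d)
  then have k: "k < N" by simp
  obtain u0 where P': "psd_kernel (\<lambda>i j. A i j - u0 i * cnj (u0 j)) N"
    and Z': "\<forall>i<N. \<forall>j<N. (i < Suc k \<or> j < Suc k) \<longrightarrow> A i j - u0 i * cnj (u0 j) = 0"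
    using psd_kernel_peel[OF Suc.prems(2) k Suc.prems(3)] by blast
  have d: "N - Suc k = d" using Suc.prems(1) by simp
  obtain m :: nat and u where mu: "\<forall>i<N. \<forall>j<N. A i j - u0 i * cnj (u0 j) = (\<Sum>r<m. u r i * cnj (u r j))"
    using Suc.IH[OF d P' Z'] by blast
  define u' where "u' = (\<lambda>r. if r < m then u r else u0)"
  have "(\<Sum>r<Suc m. u' r i * cnj (u' r j)) = (\<Sum>r<m. u r i * cnj (u r j)) + u0 i * cnj (u0 j)" for i j
    unfolding u'_def by simp
  with mu have "\<forall>i<N. \<forall>j<N. A i j = (\<Sum>r<Suc m. u' r i * cnj (u' r j))"
    by (metis diff_add_cancel)
  then show ?case by blast
qed

lemma psd_kernel_gram:
  assumes "psd_kernel A N"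
  shows "\<exists>(m::nat) u. \<forall>i<N. \<forall>j<N. A i j = (\<Sum>r<m. u r i * cnj (u r j))"
  by (rule psd_kernel_gram_from[OF diff_zero assms]) simp

lemma sum_rotate3: "(\<Sum>a\<in>A. \<Sum>b\<in>B. \<Sum>c\<in>C. f a b c) = (\<Sum>c\<in>C. \<Sum>a\<in>A. \<Sum>b\<in>B. f a b c)"
  by (subst sum.swap, subst (2) sum.swap) (rule refl)

definition purity :: "('a \<Rightarrow> 'a \<Rightarrow> complex) \<Rightarrow> 'a set \<Rightarrow> real" where
  "purity R A = Re (\<Sum>a\<in>A. \<Sum>b\<in>A. R a b * R b a)"

text \<open>Reduced density matrix on the first factor of a (not necessarily normalised) pure
  tripartite state w on A x B x C.\<close>

definition marginal :: "('a \<Rightarrow> 'b \<Rightarrow> 'c \<Rightarrow> complex) \<Rightarrow> 'b set \<Rightarrow> 'c set \<Rightarrow> 'a \<Rightarrow> 'a \<Rightarrow> complex" where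
  "marginal w B C a a' = (\<Sum>b\<in>B. \<Sum>c\<in>C. w a b c * cnj (w a' b c))"

lemma sum_involution:
  assumes "\<forall>x\<in>D. \<sigma> x \<in> D \<and> \<sigma> (\<sigma> x) = x"
  shows "(\<Sum>x\<in>D. g (\<sigma> x)) = (\<Sum>x\<in>D. g x)"
  by (rule sum.reindex_bij_witness[where i=\<sigma> and j=\<sigma>]) (use assms in auto)

lemma overlap_odd_involution:
  assumes \<sigma>: "\<forall>x\<in>D. \<sigma> x \<in> D \<and> \<sigma> (\<sigma> x) = x" and odd: "\<And>x. x \<in> D \<Longrightarrow> T (\<sigma> x) = - T x"
  shows "(\<Sum>x\<in>D. g (\<sigma> x) * cnj (T x)) = - (\<Sum>x\<in>D. g x * cnj (T x))"
proof -
  have "(\<Sum>x\<in>D. g (\<sigma> x) * cnj (T x)) = (\<Sum>x\<in>D. g (\<sigma> (\<sigma> x)) * cnj (T (\<sigma> x)))"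
    by (rule sum_involution[OF \<sigma>, symmetric])
  also have "\<dots> = (\<Sum>x\<in>D. - (g x * cnj (T x)))"
    by (intro sum.cong refl) (use \<sigma> odd in simp)
  finally show ?thesis by (simp add: sum_negf)
qed

lemma norm_antisymmetrization:
  fixes f :: "'d \<Rightarrow> complex"
  assumes \<sigma>: "\<forall>x\<in>D. \<sigma> x \<in> D \<and> \<sigma> (\<sigma> x) = x" and \<tau>: "\<forall>x\<in>D. \<tau> x \<in> D \<and> \<tau> (\<tau> x) = x"
    and comm: "\<forall>x\<in>D. \<sigma> (\<tau> x) = \<tau> (\<sigma> x)"
  defines "T \<equiv> \<lambda>x. f x - f (\<sigma> x) - f (\<tau> x) + f (\<sigma> (\<tau> x))"
  shows "(\<Sum>x\<in>D. T x * cnj (T x)) = 4 * (\<Sum>x\<in>D. f x * cnj (T x))"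
proof -
  have T\<sigma>: "T (\<sigma> x) = - T x" if x: "x \<in> D" for x
  proof -
    have "\<sigma> (\<sigma> x) = x" "\<tau> (\<sigma> x) = \<sigma> (\<tau> x)" "\<sigma> (\<tau> (\<sigma> x)) = \<tau> x"
      using x \<sigma> \<tau> comm by metis+
    then show ?thesis unfolding T_def by (simp add: algebra_simps)
  qed
  have T\<tau>: "T (\<tau> x) = - T x" if x: "x \<in> D" for x
    using x \<tau> unfolding T_def by (simp add: algebra_simps)
  have "(\<Sum>x\<in>D. T x * cnj (T x)) = (\<Sum>x\<in>D. f x * cnj (T x)) - (\<Sum>x\<in>D. f (\<sigma> x) * cnj (T x))
      - (\<Sum>x\<in>D. f (\<tau> x) * cnj (T x)) + (\<Sum>x\<in>D. f (\<sigma> (\<tau> x)) * cnj (T x))"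
    unfolding sum.distrib[symmetric] sum_subtractf[symmetric]
    by (intro sum.cong refl) (simp add: T_def algebra_simps)
  also have "\<dots> = 4 * (\<Sum>x\<in>D. f x * cnj (T x))"
    using overlap_odd_involution[where T=T and g=f, OF \<sigma> T\<sigma>]
      overlap_odd_involution[where T=T and g=f, OF \<tau> T\<tau>]
      overlap_odd_involution[where T=T and g="\<lambda>x. f (\<sigma> x)", OF \<tau> T\<tau>] by simp
  finally show ?thesis .
qed

text \<open>Apply the antisymmetrisation identity
  to f(c, c', a, a', b, b') = w a b c * w a' b' c' under the swaps a <-> a' and b <-> b'.\<close>

lemma audenaert_inequality:
  fixes w :: "'a \<Rightarrow> 'b \<Rightarrow> 'c \<Rightarrow> complex" and A :: "'a set" and B :: "'b set" and C :: "'c set"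
  defines "N \<equiv> \<Sum>a\<in>A. \<Sum>b\<in>B. \<Sum>c\<in>C. w a b c * cnj (w a b c)"
  shows "purity (marginal w B C) A + purity (marginal (\<lambda>b a c. w a b c) A C) B
     \<le> Re (N * N) + purity (marginal (\<lambda>c a b. w a b c) A B) C"
proof -
  define D where "D = C \<times> C \<times> A \<times> A \<times> B \<times> B"
  define f where "f = (\<lambda>(c, c', a, a', b, b'). w a b c * w a' b' c')"
  define \<sigma> :: "'c \<times> 'c \<times> 'a \<times> 'a \<times> 'b \<times> 'b \<Rightarrow> _"
    where "\<sigma> = (\<lambda>(c, c', a, a', b, b'). (c, c', a', a, b, b'))"
  define \<tau> :: "'c \<times> 'c \<times> 'a \<times> 'a \<times> 'b \<times> 'b \<Rightarrow> _"
    where "\<tau> = (\<lambda>(c, c', a, a', b, b'). (c, c', a, a', b', b))"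
  define T where "T = (\<lambda>x. f x - f (\<sigma> x) - f (\<tau> x) + f (\<sigma> (\<tau> x)))"
  have norm: "(\<Sum>x\<in>D. T x * cnj (T x)) = 4 * (\<Sum>x\<in>D. f x * cnj (T x))"
    unfolding T_def by (rule norm_antisymmetrization) (auto simp: D_def \<sigma>_def \<tau>_def)
  have f_id: "(\<Sum>x\<in>D. f x * cnj (f x)) = N * N"
    unfolding D_def f_def N_def sum_product sum.cartesian_product
    by (rule sum.reindex_bij_witness[where i="\<lambda>((a, b, c), (a', b', c')). (c, c', a, a', b, b')"
          and j="\<lambda>(c, c', a, a', b, b'). ((a, b, c), (a', b', c'))"]) (auto simp: mult_ac)
  have f_\<sigma>: "(\<Sum>x\<in>D. f x * cnj (f (\<sigma> x))) = (\<Sum>a\<in>A. \<Sum>a'\<in>A. marginal w B C a a' * marginal w B C a' a)"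
    unfolding D_def f_def \<sigma>_def marginal_def sum_product sum.cartesian_product
    by (rule sum.reindex_bij_witness[where i="\<lambda>(a, a', (b, c), (b', c')). (c, c', a, a', b, b')"
          and j="\<lambda>(c, c', a, a', b, b'). (a, a', (b, c), (b', c'))"]) (auto simp: mult_ac)
  have f_\<tau>: "(\<Sum>x\<in>D. f x * cnj (f (\<tau> x)))
      = (\<Sum>b\<in>B. \<Sum>b'\<in>B. marginal (\<lambda>b a c. w a b c) A C b b' * marginal (\<lambda>b a c. w a b c) A C b' b)"
    unfolding D_def f_def \<tau>_def marginal_def sum_product sum.cartesian_product
    by (rule sum.reindex_bij_witness[where i="\<lambda>(b, b', (a, c), (a', c')). (c, c', a, a', b, b')"
          and j="\<lambda>(c, c', a, a', b, b'). (b, b', (a, c), (a', c'))"]) (auto simp: mult_ac)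
  have f_\<sigma>\<tau>: "(\<Sum>x\<in>D. f x * cnj (f (\<sigma> (\<tau> x))))
      = (\<Sum>c\<in>C. \<Sum>c'\<in>C. marginal (\<lambda>c a b. w a b c) A B c c' * marginal (\<lambda>c a b. w a b c) A B c' c)"
    unfolding D_def f_def \<sigma>_def \<tau>_def marginal_def sum_product sum.cartesian_product
    by (rule sum.reindex_bij_witness[where i="\<lambda>(c, c', (a, b), (a', b')). (c, c', a, a', b, b')"
          and j="\<lambda>(c, c', a, a', b, b'). (c, c', (a, b), (a', b'))"]) (auto simp: mult_ac)
  have "(\<Sum>x\<in>D. f x * cnj (T x)) = (\<Sum>x\<in>D. f x * cnj (f x)) - (\<Sum>x\<in>D. f x * cnj (f (\<sigma> x)))
      - (\<Sum>x\<in>D. f x * cnj (f (\<tau> x))) + (\<Sum>x\<in>D. f x * cnj (f (\<sigma> (\<tau> x))))"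
    unfolding sum.distrib[symmetric] sum_subtractf[symmetric]
    by (intro sum.cong refl) (simp add: T_def algebra_simps)
  moreover have "0 \<le> Re (\<Sum>x\<in>D. T x * cnj (T x))"
    by (simp add: sum_nonneg)
  ultimately show ?thesis
    using norm unfolding purity_def f_id f_\<sigma> f_\<tau> f_\<sigma>\<tau> by simp
qed

lemma marginal_herm: "marginal w B C a' a = cnj (marginal w B C a a')"
  unfolding marginal_def by (simp add: mult.commute)

lemma marginal_swap: "marginal (\<lambda>a c b. w a b c) C B = marginal w B C"
  unfolding marginal_def by (intro ext sum.swap)

lemma marginal_traces:
  "(\<Sum>b\<in>B. marginal (\<lambda>b a c. w a b c) A C b b) = (\<Sum>a\<in>A. marginal w B C a a)"
  "(\<Sum>c\<in>C. marginal (\<lambda>c a b. w a b c) A B c c) = (\<Sum>a\<in>A. marginal w B C a a)"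
  unfolding marginal_def by (rule sum.swap) (rule sum_rotate3[symmetric])

lemma marginal_purity_pos:
  assumes fin: "finite A" and tr: "(\<Sum>a\<in>A. marginal w B C a a) = 1"
  shows "purity (marginal w B C) A > 0"
proof -
  let ?R = "marginal w B C"
  have sq: "?R a b * ?R b a = complex_of_real ((cmod (?R a b))^2)" for a b
    by (simp only: marginal_herm[of w B C b a] complex_norm_square[symmetric])
  have eq: "purity ?R A = (\<Sum>a\<in>A. \<Sum>b\<in>A. (cmod (?R a b))^2)"
    unfolding purity_def sq by (simp add: Re_sum)
  show ?thesis
  proof (rule ccontr)
    assume "\<not> ?thesis"
    moreover have "0 \<le> (\<Sum>a\<in>A. \<Sum>b\<in>A. (cmod (?R a b))^2)" by (intro sum_nonneg) simp
    ultimately have "(\<Sum>a\<in>A. \<Sum>b\<in>A. (cmod (?R a b))^2) = 0" using eq by linarith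
    then have "\<forall>a\<in>A. \<forall>b\<in>A. (cmod (?R a b))^2 = 0"
      using fin by (simp add: sum_nonneg_eq_0_iff sum_nonneg)
    then show False using tr by simp
  qed
qed

text \<open>Schmidt symmetry: the two reduced density matrices of a bipartite pure state V have
  the same purity.\<close>

lemma purity_gram_dual:
  "purity (\<lambda>I J. \<Sum>r\<in>R. V I r * cnj (V J r)) A = purity (\<lambda>r r'. \<Sum>I\<in>A. V I r * cnj (V I r')) R"
proof -
  have "(\<Sum>I\<in>A. \<Sum>J\<in>A. (\<Sum>r\<in>R. V I r * cnj (V J r)) * (\<Sum>r\<in>R. V J r * cnj (V I r)))
     = (\<Sum>r\<in>R. \<Sum>r'\<in>R. (\<Sum>I\<in>A. V I r * cnj (V I r')) * (\<Sum>I\<in>A. V I r' * cnj (V I r)))"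
    unfolding sum_product sum.cartesian_product
    by (rule sum.reindex_bij_witness[where i="\<lambda>(r, r', I, J). (I, J, r, r')" and j="\<lambda>(I, J, r, r'). (r, r', I, J)"])
      (auto simp: mult_ac)
  then show ?thesis unfolding purity_def by simp
qed

lemma ctrace_square:
  assumes "A \<in> carrier_mat N N"
  shows "Re (ctrace (A * A)) = purity (\<lambda>I J. A $$ (I, J)) {..<N}"
  unfolding ctrace_def purity_def using assms
  by (simp add: scalar_prod_def atLeast0LessThan)

lemma audenaert_two_sided:
  fixes w :: "'a \<Rightarrow> 'b \<Rightarrow> 'c \<Rightarrow> complex" and A :: "'a set" and B :: "'b set" and C :: "'c set"
  assumes tr: "(\<Sum>a\<in>A. marginal w B C a a) = 1"
  shows "purity (marginal w B C) A
    \<le> 1 - \<bar>purity (marginal (\<lambda>b a c. w a b c) A C) B - purity (marginal (\<lambda>c a b. w a b c) A B) C\<bar>"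
proof -
  have norm: "(\<Sum>a\<in>A. \<Sum>b\<in>B. \<Sum>c\<in>C. w a b c * cnj (w a b c)) = 1"
    using tr unfolding marginal_def .
  have "(\<Sum>a\<in>A. \<Sum>c\<in>C. \<Sum>b\<in>B. w a b c * cnj (w a b c)) = (\<Sum>a\<in>A. \<Sum>b\<in>B. \<Sum>c\<in>C. w a b c * cnj (w a b c))"
    by (rule sum.cong[OF refl]) (rule sum.swap)
  with norm have norm': "(\<Sum>a\<in>A. \<Sum>c\<in>C. \<Sum>b\<in>B. w a b c * cnj (w a b c)) = 1" by simp
  have "purity (marginal w B C) A + purity (marginal (\<lambda>b a c. w a b c) A C) B
      \<le> Re (1 * 1) + purity (marginal (\<lambda>c a b. w a b c) A B) C"
    using audenaert_inequality[where w=w and A=A and B=B and C=C] unfolding norm .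
  moreover have "purity (marginal w B C) A + purity (marginal (\<lambda>c a b. w a b c) A B) C
      \<le> Re (1 * 1) + purity (marginal (\<lambda>b a c. w a b c) A C) B"
    using audenaert_inequality[where w="\<lambda>a c b. w a b c" and A=A and B=C and C=B] unfolding norm' marginal_swap[of w] .
  moreover have "Re (1 * 1 :: complex) = 1" by simp
  ultimately show ?thesis by linarith
qed

lemma psd_imp_psd_kernel:
  assumes "psd A" "A \<in> carrier_mat N N"
  shows "psd_kernel (\<lambda>i j. A $$ (i, j)) N"
  unfolding psd_kernel_def
proof
  fix v :: "nat \<Rightarrow> complex"
  have d: "dim_row A = N" using assms(2) by simp
  obtain r where "r \<ge> 0" "(\<Sum>i<N. \<Sum>j<N. cnj (vec N v $ i) * A $$ (i, j) * vec N v $ j) = complex_of_real r"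
    using assms(1) unfolding psd_def d by (meson vec_carrier)
  then show "\<exists>r\<ge>0. quad_form (\<lambda>i j. A $$ (i, j)) N v = complex_of_real r"
    unfolding quad_form_def by auto
qed

lemma outer_carrier [simp]: "outer v \<in> carrier_mat (dim_vec v) (dim_vec v)"
  unfolding outer_def by simp

lemma psd_outer: "psd (outer v)"
proof -
  let ?d = "dim_vec v"
  have dr: "dim_row (outer v) = ?d" unfolding outer_def by simp
  show ?thesis unfolding psd_def dr
  proof (intro conjI ballI)
    show "outer v \<in> carrier_mat ?d ?d" by simp
    fix x :: "complex vec" assume "x \<in> carrier_vec ?d"
    define s where "s = (\<Sum>i<?d. cnj (x $ i) * v $ i)"
    have "(\<Sum>i<?d. \<Sum>j<?d. cnj (x $ i) * outer v $$ (i, j) * x $ j)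
       = (\<Sum>i<?d. \<Sum>j<?d. (cnj (x $ i) * v $ i) * (cnj (v $ j) * x $ j))"
      unfolding outer_def by (intro sum.cong refl) (simp add: algebra_simps)
    also have "\<dots> = complex_of_real ((cmod s)^2)"
      unfolding s_def cnj_sum complex_norm_square by (simp add: sum_product mult_ac)
    finally show "\<exists>r\<ge>0. (\<Sum>i<?d. \<Sum>j<?d. cnj (x $ i) * outer v $$ (i, j) * x $ j) = complex_of_real r"
      by (intro exI[of _ "(cmod s)^2"]) simp
  qed
qed

lemma pair_index_less: "i < n \<Longrightarrow> c < n \<Longrightarrow> i * n + c < n * (n::nat)"
proof -
  assume "i < n" "c < n"
  then have "i * n + c < Suc i * n" by simp
  also have "\<dots> \<le> n * n" using mult_le_mono1[OF Suc_leI[OF \<open>i < n\<close>], of n] by simp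
  finally show ?thesis .
qed

lemma pair_index_mod: "I < n * (n::nat) \<Longrightarrow> I mod n < n"
  by (cases "n = 0") simp_all

lemma pair_index_div: "I < n * (n::nat) \<Longrightarrow> I div n < n"
  by (simp add: less_mult_imp_div_less)

lemma sum_pair_index: "(\<Sum>I<n * (n::nat). f (I div n) (I mod n)) = (\<Sum>x<n. \<Sum>y<n. f x y)"
proof -
  have "(\<Sum>I<n * n. f (I div n) (I mod n)) = (\<Sum>(x, y)\<in>{..<n} \<times> {..<n}. f x y)"
    by (rule sum.reindex_bij_witness[where i="\<lambda>(x, y). x * n + y" and j="\<lambda>I. (I div n, I mod n)"])
      (auto simp: pair_index_mod pair_index_div pair_index_less)
  thus ?thesis by (simp add: sum.cartesian_product)
qed

lemma channel_carrier: "quantum_channel n \<Phi> \<Longrightarrow> A \<in> carrier_mat n n \<Longrightarrow> \<Phi> A \<in> carrier_mat n n"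
  unfolding quantum_channel_def by blast

lemma channel_add:
  "quantum_channel n \<Phi> \<Longrightarrow> A \<in> carrier_mat n n \<Longrightarrow> B \<in> carrier_mat n n \<Longrightarrow> \<Phi> (A + B) = \<Phi> A + \<Phi> B"
  unfolding quantum_channel_def by blast

lemma channel_smult: "quantum_channel n \<Phi> \<Longrightarrow> A \<in> carrier_mat n n \<Longrightarrow> \<Phi> (c \<cdot>\<^sub>m A) = c \<cdot>\<^sub>m \<Phi> A"
  unfolding quantum_channel_def by blast

lemma channel_trace: "quantum_channel n \<Phi> \<Longrightarrow> A \<in> carrier_mat n n \<Longrightarrow> ctrace (\<Phi> A) = ctrace A"
  unfolding quantum_channel_def by blast

lemma channel_cp:
  "quantum_channel n \<Phi> \<Longrightarrow> X \<in> carrier_mat (n * k) (n * k) \<Longrightarrow> psd X \<Longrightarrow> psd (apply_first \<Phi> n k X)"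
  unfolding quantum_channel_def by blast

definition unit_mat :: "nat \<Rightarrow> nat \<Rightarrow> nat \<Rightarrow> complex mat" where
  "unit_mat n c c' = mat n n (\<lambda>(a, a'). if a = c \<and> a' = c' then 1 else 0)"

lemma unit_mat_carrier [simp]: "unit_mat n c c' \<in> carrier_mat n n"
  unfolding unit_mat_def by simp

lemma ctrace_unit_mat:
  assumes "c < n" shows "ctrace (unit_mat n c c') = (if c = c' then 1 else 0)"
proof -
  have "ctrace (unit_mat n c c') = (\<Sum>i<n. if i = c then (if c = c' then 1 else 0) else 0)"
    unfolding ctrace_def unit_mat_def by (intro sum.cong) auto
  then show ?thesis using assms by simp
qed

lemma channel_expand_on:
  assumes Q: "quantum_channel n \<Phi>" and S: "finite S" "S \<subseteq> {..<n} \<times> {..<n}"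
  shows "\<Phi> (mat n n (\<lambda>p. if p \<in> S then X $$ p else 0)) \<in> carrier_mat n n \<and>
    (\<forall>i<n. \<forall>j<n. \<Phi> (mat n n (\<lambda>p. if p \<in> S then X $$ p else 0)) $$ (i, j)
        = (\<Sum>p\<in>S. X $$ p * \<Phi> (unit_mat n (fst p) (snd p)) $$ (i, j)))"
  using S
proof (induction S rule: finite_induct)
  case empty
  have M0: "mat n n (\<lambda>p. if p \<in> {} then X $$ p else 0) = 0 \<cdot>\<^sub>m (0\<^sub>m n n :: complex mat)"
    by (rule eq_matI) auto
  have C0: "\<Phi> (0\<^sub>m n n) \<in> carrier_mat n n" using channel_carrier[OF Q] by simp
  show ?case unfolding M0 channel_smult[OF Q zero_carrier_mat] using C0 by auto
next
  case (insert p S)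
  obtain c c' where p: "p = (c, c')" by fastforce
  let ?M = "mat n n (\<lambda>p. if p \<in> S then X $$ p else 0)"
  let ?E = "unit_mat n c c'"
  have IH: "\<Phi> ?M \<in> carrier_mat n n"
    "\<And>i j. i < n \<Longrightarrow> j < n \<Longrightarrow> \<Phi> ?M $$ (i, j) = (\<Sum>q\<in>S. X $$ q * \<Phi> (unit_mat n (fst q) (snd q)) $$ (i, j))"
    using insert.IH insert.prems by auto
  have "mat n n (\<lambda>q. if q \<in> insert p S then X $$ q else 0) = ?M + X $$ p \<cdot>\<^sub>m ?E"
    by (rule eq_matI) (use insert.hyps p in \<open>auto simp: unit_mat_def\<close>)
  moreover have "\<Phi> (?M + X $$ p \<cdot>\<^sub>m ?E) = \<Phi> ?M + X $$ p \<cdot>\<^sub>m \<Phi> ?E"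
    using channel_add[OF Q _ smult_carrier_mat] channel_smult[OF Q] by simp
  moreover have CE: "\<Phi> ?E \<in> carrier_mat n n" using channel_carrier[OF Q] by simp
  moreover have "(\<Phi> ?M + X $$ p \<cdot>\<^sub>m \<Phi> ?E) $$ (i, j)
      = (\<Sum>q\<in>insert p S. X $$ q * \<Phi> (unit_mat n (fst q) (snd q)) $$ (i, j))" if "i < n" "j < n" for i j
    using that IH CE insert.hyps p by simp
  ultimately show ?case using IH(1) CE by simp
qed

lemma channel_expand:
  assumes Q: "quantum_channel n \<Phi>" and X: "X \<in> carrier_mat n n" and i: "i < n" and j: "j < n"
  shows "\<Phi> X $$ (i, j) = (\<Sum>c<n. \<Sum>c'<n. X $$ (c, c') * \<Phi> (unit_mat n c c') $$ (i, j))"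
proof -
  have "mat n n (\<lambda>p. if p \<in> {..<n} \<times> {..<n} then X $$ p else 0) = X"
    by (rule eq_matI) (use X in auto)
  then have "\<Phi> X $$ (i, j) = (\<Sum>p\<in>{..<n} \<times> {..<n}. X $$ p * \<Phi> (unit_mat n (fst p) (snd p)) $$ (i, j))"
    using channel_expand_on[OF Q, of "{..<n} \<times> {..<n}" X] i j by simp
  then show ?thesis by (simp add: sum.cartesian_product case_prod_beta)
qed

lemma phi_plus_dim [simp]: "dim_vec (phi_plus n) = n * n"
  unfolding phi_plus_def by simp

lemma phi_plus_index: "a < n \<Longrightarrow> c < n \<Longrightarrow>
  phi_plus n $ (a * n + c) = (if a = c then complex_of_real (1 / sqrt (real n)) else 0)"
  unfolding phi_plus_def using pair_index_less[of a n c] by simp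

lemma inv_sqrt_norm_square:
  "n > 0 \<Longrightarrow> complex_of_real (1 / sqrt (real n)) * cnj (complex_of_real (1 / sqrt (real n))) = 1 / of_nat n"
  by (simp flip: of_real_mult)

lemma jamiolkowski_entry:
  assumes Q: "quantum_channel n \<Phi>" and i: "i < n" and j: "j < n" and c: "c < n" and c': "c' < n"
  shows "jamiolkowski n \<Phi> $$ (i * n + c, j * n + c') = 1 / of_nat n * \<Phi> (unit_mat n c c') $$ (i, j)"
proof -
  have n: "n > 0" using i by simp
  have block: "mat n n (\<lambda>(a, a'). outer (phi_plus n) $$ (a * n + (i * n + c) mod n, a' * n + (j * n + c') mod n))
     = (1 / of_nat n) \<cdot>\<^sub>m unit_mat n c c'"
    by (rule eq_matI)
      (use c c' pair_index_less[OF _ c] pair_index_less[OF _ c'] inv_sqrt_norm_square[OF n]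
        in \<open>auto simp: outer_def phi_plus_index unit_mat_def\<close>)
  have "jamiolkowski n \<Phi> $$ (i * n + c, j * n + c')
     = \<Phi> ((1 / of_nat n) \<cdot>\<^sub>m unit_mat n c c') $$ (i, j)"
    unfolding jamiolkowski_def apply_first_def block[symmetric]
    using pair_index_less[OF i c] pair_index_less[OF j c'] c c' by simp
  also have "\<dots> = 1 / of_nat n * \<Phi> (unit_mat n c c') $$ (i, j)"
    unfolding channel_smult[OF Q unit_mat_carrier] using channel_carrier[OF Q unit_mat_carrier, of c c'] i j by simp
  finally show ?thesis .
qed

text \<open>Kraus representation Phi(X) = sum_r K_r X K_r^*, with K r i c the (i, c) entry of
  the r-th Kraus operator; completeness sum_r K_r^* K_r = 1 expresses trace preservation.\<close>

definition kraus_rep :: "nat \<Rightarrow> (complex mat \<Rightarrow> complex mat) \<Rightarrow> nat \<Rightarrow> (nat \<Rightarrow> nat \<Rightarrow> nat \<Rightarrow> complex) \<Rightarrow> bool" where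
  "kraus_rep n \<Phi> m K \<longleftrightarrow> (\<forall>X \<in> carrier_mat n n. \<forall>i<n. \<forall>j<n.
     \<Phi> X $$ (i, j) = (\<Sum>r<m. \<Sum>c<n. \<Sum>c'<n. K r i c * X $$ (c, c') * cnj (K r j c')))"

definition kraus_complete :: "nat \<Rightarrow> nat \<Rightarrow> (nat \<Rightarrow> nat \<Rightarrow> nat \<Rightarrow> complex) \<Rightarrow> bool" where
  "kraus_complete n m K \<longleftrightarrow> (\<forall>c<n. \<forall>c'<n. (\<Sum>r<m. \<Sum>i<n. K r i c * cnj (K r i c')) = (if c = c' then 1 else 0))"

text \<open>Choi's theorem, first half: a Gram decomposition of the positive semidefinite Choi
  matrix writes the image of every matrix unit as Phi(E_cc')_ij = sum_r K_r,ic conj(K_r,jc').\<close>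

lemma channel_unit_images:
  assumes Q: "quantum_channel n \<Phi>"
  shows "\<exists>(m::nat) K. \<forall>i<n. \<forall>j<n. \<forall>c<n. \<forall>c'<n.
    \<Phi> (unit_mat n c c') $$ (i, j) = (\<Sum>r<m. K r i c * cnj (K r j c'))"
proof -
  define J where "J = jamiolkowski n \<Phi>"
  have Jc: "J \<in> carrier_mat (n * n) (n * n)" unfolding J_def jamiolkowski_def apply_first_def by simp
  have "psd J" unfolding J_def jamiolkowski_def
    by (rule channel_cp[OF Q _ psd_outer]) (use outer_carrier[of "phi_plus n"] in simp)
  then obtain m :: nat and u where mu: "\<forall>I<n * n. \<forall>I'<n * n. J $$ (I, I') = (\<Sum>r<m. u r I * cnj (u r I'))"
    using psd_kernel_gram[OF psd_imp_psd_kernel[OF _ Jc]] by blast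
  define K where "K = (\<lambda>r i c. complex_of_real (sqrt (real n)) * u r (i * n + c))"
  have sq: "complex_of_real (sqrt (real n)) * cnj (complex_of_real (sqrt (real n))) = of_nat n"
    by (simp flip: of_real_mult)
  have "\<Phi> (unit_mat n c c') $$ (i, j) = (\<Sum>r<m. K r i c * cnj (K r j c'))"
    if "i < n" "j < n" "c < n" "c' < n" for i j c c'
  proof -
    have "\<Phi> (unit_mat n c c') $$ (i, j) = of_nat n * J $$ (i * n + c, j * n + c')"
      unfolding J_def jamiolkowski_entry[OF Q that] using that by simp
    also have "\<dots> = (\<Sum>r<m. K r i c * cnj (K r j c'))"
      using mu pair_index_less[OF that(1,3)] pair_index_less[OF that(2,4)]
      by (simp add: K_def sum_distrib_left sq[symmetric] mult_ac)
    finally show ?thesis .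
  qed
  then show ?thesis by blast
qed

text \<open>Choi's theorem, second half: by linearity the images of the matrix units determine
  a Kraus representation, and trace preservation makes it complete.\<close>

lemma channel_kraus:
  assumes Q: "quantum_channel n \<Phi>"
  obtains m K where "kraus_rep n \<Phi> m K" and "kraus_complete n m K"
proof -
  obtain m :: nat and K where units: "\<forall>i<n. \<forall>j<n. \<forall>c<n. \<forall>c'<n.
      \<Phi> (unit_mat n c c') $$ (i, j) = (\<Sum>r<m. K r i c * cnj (K r j c'))"
    using channel_unit_images[OF Q] by blast
  have "kraus_rep n \<Phi> m K" unfolding kraus_rep_def
  proof (intro ballI allI impI)
    fix X :: "complex mat" and i j assume X: "X \<in> carrier_mat n n" and i: "i < n" and j: "j < n"
    have "\<Phi> X $$ (i, j) = (\<Sum>c<n. \<Sum>c'<n. \<Sum>r<m. K r i c * X $$ (c, c') * cnj (K r j c'))"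
      unfolding channel_expand[OF Q X i j] using units i j
      by (simp add: sum_distrib_left mult_ac)
    also have "\<dots> = (\<Sum>r<m. \<Sum>c<n. \<Sum>c'<n. K r i c * X $$ (c, c') * cnj (K r j c'))"
      by (rule sum_rotate3)
    finally show "\<Phi> X $$ (i, j) = (\<Sum>r<m. \<Sum>c<n. \<Sum>c'<n. K r i c * X $$ (c, c') * cnj (K r j c'))" .
  qed
  moreover have "kraus_complete n m K" unfolding kraus_complete_def
  proof (intro allI impI)
    fix c c' assume c: "c < n" and c': "c' < n"
    have "(if c = c' then 1 else 0) = ctrace (\<Phi> (unit_mat n c c'))"
      using channel_trace[OF Q unit_mat_carrier] ctrace_unit_mat[OF c] by simp
    also have "\<dots> = (\<Sum>i<n. \<Sum>r<m. K r i c * cnj (K r i c'))"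
      unfolding ctrace_def using channel_carrier[OF Q unit_mat_carrier, of c c'] units c c' by simp
    also have "\<dots> = (\<Sum>r<m. \<Sum>i<n. K r i c * cnj (K r i c'))"
      by (rule sum.swap)
    finally show "(\<Sum>r<m. \<Sum>i<n. K r i c * cnj (K r i c')) = (if c = c' then 1 else 0)" ..
  qed
  ultimately show ?thesis by (rule that)
qed

lemma kraus_apply_gram:
  assumes kr: "kraus_rep n \<Phi> m K" and X: "X \<in> carrier_mat n n" and i: "i < n" and j: "j < n"
    and Xe: "\<And>c c'. c < n \<Longrightarrow> c' < n \<Longrightarrow> X $$ (c, c') = (\<Sum>s\<in>S. f s c * cnj (g s c'))"
  shows "\<Phi> X $$ (i, j) = (\<Sum>s\<in>S. \<Sum>r<m. (\<Sum>c<n. K r i c * f s c) * cnj (\<Sum>c'<n. K r j c' * g s c'))"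
proof -
  have "\<Phi> X $$ (i, j) = (\<Sum>r<m. \<Sum>c<n. \<Sum>c'<n. K r i c * (\<Sum>s\<in>S. f s c * cnj (g s c')) * cnj (K r j c'))"
    using kr X i j Xe unfolding kraus_rep_def by simp
  also have "\<dots> = (\<Sum>r<m. \<Sum>c<n. \<Sum>c'<n. \<Sum>s\<in>S. K r i c * f s c * (cnj (K r j c') * cnj (g s c')))"
    by (simp add: sum_distrib_left sum_distrib_right mult_ac)
  also have "\<dots> = (\<Sum>s\<in>S. \<Sum>r<m. \<Sum>c<n. \<Sum>c'<n. K r i c * f s c * (cnj (K r j c') * cnj (g s c')))"
    unfolding sum.cartesian_product
    by (rule sum.reindex_bij_witness[where i="\<lambda>(s, r, c, c'). (r, c, c', s)" and j="\<lambda>(r, c, c', s). (s, r, c, c')"]) auto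
  also have "\<dots> = (\<Sum>s\<in>S. \<Sum>r<m. (\<Sum>c<n. K r i c * f s c) * cnj (\<Sum>c'<n. K r j c' * g s c'))"
    by (simp add: sum_product cnj_sum)
  finally show ?thesis .
qed

lemma apply_first_kraus:
  assumes kr: "kraus_rep n \<Phi> m K" and I: "I < n * n" and J: "J < n * n"
    and Xe: "\<And>p q. p < n * n \<Longrightarrow> q < n * n \<Longrightarrow> X $$ (p, q) = (\<Sum>s\<in>S. v s p * cnj (v s q))"
  shows "apply_first \<Phi> n n X $$ (I, J) = (\<Sum>s\<in>S. \<Sum>r<m.
     (\<Sum>a<n. K r (I div n) a * v s (a * n + I mod n)) * cnj (\<Sum>a<n. K r (J div n) a * v s (a * n + J mod n)))"
proof -
  let ?M = "mat n n (\<lambda>(a, a'). X $$ (a * n + I mod n, a' * n + J mod n))"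
  have "?M $$ (c, c') = (\<Sum>s\<in>S. v s (c * n + I mod n) * cnj (v s (c' * n + J mod n)))"
    if "c < n" "c' < n" for c c'
    using that Xe pair_index_less[OF that(1) pair_index_mod[OF I]] pair_index_less[OF that(2) pair_index_mod[OF J]]
    by simp
  from kraus_apply_gram[OF kr _ pair_index_div[OF I] pair_index_div[OF J] this]
  show ?thesis unfolding apply_first_def using I J by simp
qed

lemma apply_second_kraus:
  assumes kr: "kraus_rep n \<Phi> m L" and I: "I < n * n" and J: "J < n * n"
    and Xe: "\<And>p q. p < n * n \<Longrightarrow> q < n * n \<Longrightarrow> X $$ (p, q) = (\<Sum>s\<in>S. v s p * cnj (v s q))"
  shows "apply_second \<Phi> n n X $$ (I, J) = (\<Sum>s\<in>S. \<Sum>r<m.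
     (\<Sum>b<n. L r (I mod n) b * v s (I div n * n + b)) * cnj (\<Sum>b<n. L r (J mod n) b * v s (J div n * n + b)))"
proof -
  let ?M = "mat n n (\<lambda>(b, b'). X $$ (I div n * n + b, J div n * n + b'))"
  have "?M $$ (c, c') = (\<Sum>s\<in>S. v s (I div n * n + c) * cnj (v s (J div n * n + c')))"
    if "c < n" "c' < n" for c c'
    using that Xe pair_index_less[OF pair_index_div[OF I] that(1)] pair_index_less[OF pair_index_div[OF J] that(2)]
    by simp
  from kraus_apply_gram[OF kr _ pair_index_mod[OF I] pair_index_mod[OF J] this]
  show ?thesis unfolding apply_second_def using I J by simp
qed

lemma outer_entry: "p < dim_vec v \<Longrightarrow> q < dim_vec v \<Longrightarrow> outer v $$ (p, q) = (\<Sum>s\<in>{()}. v $ p * cnj (v $ q))"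
  unfolding outer_def by simp

text \<open>The vector (K_r (x) L_s) psi, indexed by I = x * n + y and the Kraus labels r, s.
  As a function of (I, r, s) it is a purification of the output state
  (Phi1 (x) Phi2)(|psi><psi|): tracing out r and s recovers that state.\<close>

definition kraus_state ::
  "nat \<Rightarrow> (nat \<Rightarrow> nat \<Rightarrow> nat \<Rightarrow> complex) \<Rightarrow> (nat \<Rightarrow> nat \<Rightarrow> nat \<Rightarrow> complex) \<Rightarrow> complex vec \<Rightarrow> nat \<Rightarrow> nat \<Rightarrow> nat \<Rightarrow> complex"
  where "kraus_state n K L \<psi> I r s = (\<Sum>a<n. K r (I div n) a * (\<Sum>b<n. L s (I mod n) b * \<psi> $ (a * n + b)))"

text \<open>Applying the Kraus forms of Phi2 and then Phi1 factor by factor shows that the output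
  state is the first marginal of the purification.\<close>

lemma tensor_channel_kraus_state:
  assumes kr1: "kraus_rep n \<Phi>1 m1 K" and kr2: "kraus_rep n \<Phi>2 m2 L"
    and \<psi>: "\<psi> \<in> carrier_vec (n * n)" and I: "I < n * n" and J: "J < n * n"
  shows "tensor_channel \<Phi>1 \<Phi>2 n (outer \<psi>) $$ (I, J) = marginal (kraus_state n K L \<psi>) {..<m1} {..<m2} I J"
proof -
  define \<xi> where "\<xi> = (\<lambda>s p. \<Sum>b<n. L s (p mod n) b * \<psi> $ (p div n * n + b))"
  have Y: "apply_second \<Phi>2 n n (outer \<psi>) $$ (p, q) = (\<Sum>s\<in>{..<m2}. \<xi> s p * cnj (\<xi> s q))"
    if "p < n * n" "q < n * n" for p q
    using apply_second_kraus[OF kr2 that, where X="outer \<psi>" and S="{()}" and v="\<lambda>_ p. \<psi> $ p"] \<psi> outer_entry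
    unfolding \<xi>_def by simp
  have "tensor_channel \<Phi>1 \<Phi>2 n (outer \<psi>) $$ (I, J) = (\<Sum>s<m2. \<Sum>r<m1.
     (\<Sum>a<n. K r (I div n) a * \<xi> s (a * n + I mod n)) * cnj (\<Sum>a<n. K r (J div n) a * \<xi> s (a * n + J mod n)))"
    unfolding tensor_channel_def by (rule apply_first_kraus[OF kr1 I J Y])
  also have "\<dots> = (\<Sum>s<m2. \<Sum>r<m1. kraus_state n K L \<psi> I r s * cnj (kraus_state n K L \<psi> J r s))"
    unfolding \<xi>_def kraus_state_def using pair_index_mod[OF I] pair_index_mod[OF J] by simp
  also have "\<dots> = marginal (kraus_state n K L \<psi>) {..<m1} {..<m2} I J"
    unfolding marginal_def by (rule sum.swap)
  finally show ?thesis .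
qed

lemma output_purity:
  assumes kr1: "kraus_rep n \<Phi>1 m1 K" and kr2: "kraus_rep n \<Phi>2 m2 L" and \<psi>: "\<psi> \<in> carrier_vec (n * n)"
  shows "Re (ctrace (tensor_channel \<Phi>1 \<Phi>2 n (outer \<psi>) * tensor_channel \<Phi>1 \<Phi>2 n (outer \<psi>)))
    = purity (marginal (kraus_state n K L \<psi>) {..<m1} {..<m2}) {..<n * n}"
proof -
  have \<rho>: "tensor_channel \<Phi>1 \<Phi>2 n (outer \<psi>) \<in> carrier_mat (n * n) (n * n)"
    unfolding tensor_channel_def apply_first_def by simp
  show ?thesis
    unfolding ctrace_square[OF \<rho>] purity_def
    by (intro arg_cong[where f=Re] sum.cong refl) (simp add: tensor_channel_kraus_state[OF kr1 kr2 \<psi>])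
qed

text \<open>Normalised Hilbert--Schmidt overlaps (1/n) tr(K_r'^* K_r) of the Kraus operators;
  this is the Gram matrix dual to the Choi matrix.\<close>

definition kraus_overlap :: "nat \<Rightarrow> (nat \<Rightarrow> nat \<Rightarrow> nat \<Rightarrow> complex) \<Rightarrow> nat \<Rightarrow> nat \<Rightarrow> complex" where
  "kraus_overlap n K r r' = 1 / of_nat n * (\<Sum>x<n. \<Sum>a<n. K r x a * cnj (K r' x a))"

text \<open>The Jamiolkowski state is the Gram matrix of the vectors (K_r,xy / sqrt n)_r, so by
  Schmidt symmetry its purity is that of the dual Gram matrix, the Kraus overlap matrix.\<close>

lemma jamiolkowski_purity:
  assumes kr: "kraus_rep n \<Phi> m K" and n: "n > 0"
  shows "Re (ctrace (jamiolkowski n \<Phi> * jamiolkowski n \<Phi>)) = purity (kraus_overlap n K) {..<m}"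
proof -
  define c0 where "c0 = complex_of_real (1 / sqrt (real n))"
  define V where "V = (\<lambda>I r. K r (I div n) (I mod n) * c0)"
  have phi: "(\<Sum>a<n. K r x a * phi_plus n $ (a * n + y)) = K r x y * c0" if "y < n" for r x y
  proof -
    have "(\<Sum>a<n. K r x a * phi_plus n $ (a * n + y)) = (\<Sum>a<n. if a = y then K r x a * c0 else 0)"
      by (intro sum.cong refl) (use that in \<open>simp add: phi_plus_index c0_def\<close>)
    then show ?thesis using that by simp
  qed
  have Jc: "jamiolkowski n \<Phi> \<in> carrier_mat (n * n) (n * n)"
    unfolding jamiolkowski_def apply_first_def by simp
  have "jamiolkowski n \<Phi> $$ (I, J) = (\<Sum>r<m. V I r * cnj (V J r))" if "I < n * n" "J < n * n" for I J
    using apply_first_kraus[OF kr that, where X="outer (phi_plus n)" and S="{()}" and v="\<lambda>_ p. phi_plus n $ p"]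
      outer_entry[of _ "phi_plus n"] phi pair_index_mod[OF that(1)] pair_index_mod[OF that(2)]
    unfolding jamiolkowski_def V_def by simp
  then have "Re (ctrace (jamiolkowski n \<Phi> * jamiolkowski n \<Phi>))
      = purity (\<lambda>I J. \<Sum>r<m. V I r * cnj (V J r)) {..<n * n}"
    unfolding ctrace_square[OF Jc] purity_def by simp
  also have "\<dots> = purity (\<lambda>r r'. \<Sum>I<n * n. V I r * cnj (V I r')) {..<m}"
    by (rule purity_gram_dual)
  also have "(\<lambda>r r'. \<Sum>I<n * n. V I r * cnj (V I r')) = kraus_overlap n K"
  proof (intro ext)
    fix r r'
    have "c0 * cnj c0 = 1 / of_nat n" unfolding c0_def using n by (rule inv_sqrt_norm_square)
    then have "K r x y * c0 * cnj (K r' x y * c0) = 1 / of_nat n * (K r x y * cnj (K r' x y))" for x y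
      by (metis complex_cnj_mult mult.commute mult.left_commute)
    then show "(\<Sum>I<n * n. V I r * cnj (V I r')) = kraus_overlap n K r r'"
      unfolding V_def kraus_overlap_def sum_pair_index[of "\<lambda>x y. K r x y * c0 * cnj (K r' x y * c0)"]
      by (simp add: sum_distrib_left)
  qed
  finally show ?thesis .
qed

lemma isometry_inner:
  fixes n :: nat
  assumes h: "\<And>b b'. b < n \<Longrightarrow> b' < n \<Longrightarrow> (\<Sum>a\<in>A. h a b * cnj (h a b')) = (if b = b' then c else 0)"
  shows "(\<Sum>a\<in>A. (\<Sum>b<n. h a b * F b) * cnj (\<Sum>b<n. h a b * G b)) = c * (\<Sum>b<n. F b * cnj (G b))"
proof -
  have "(\<Sum>a\<in>A. (\<Sum>b<n. h a b * F b) * cnj (\<Sum>b<n. h a b * G b))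
      = (\<Sum>a\<in>A. \<Sum>b<n. \<Sum>b'<n. F b * cnj (G b') * (h a b * cnj (h a b')))"
    by (simp add: sum_product mult_ac)
  also have "\<dots> = (\<Sum>b<n. \<Sum>b'<n. F b * cnj (G b') * (\<Sum>a\<in>A. h a b * cnj (h a b')))"
    by (simp add: sum_rotate3[of _ A] sum_distrib_left)
  also have "\<dots> = (\<Sum>b<n. \<Sum>b'<n. if b' = b then F b * cnj (G b') * c else 0)"
    by (intro sum.cong refl) (simp add: h)
  also have "\<dots> = (\<Sum>b<n. F b * cnj (G b) * c)"
    by (intro sum.cong refl) simp
  finally show ?thesis by (simp add: sum_distrib_left mult_ac)
qed

lemma maximally_entangled_rows:
  assumes me: "maximally_entangled n \<psi>" and a: "a < n" and a': "a' < n"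
  shows "(\<Sum>b<n. \<psi> $ (a * n + b) * cnj (\<psi> $ (a' * n + b))) = (if a = a' then 1 / of_nat n else 0)"
proof -
  have dim: "dim_vec \<psi> = n * n" and pt: "ptrace_second n n (outer \<psi>) = (1 / of_nat n) \<cdot>\<^sub>m 1\<^sub>m n"
    using me unfolding maximally_entangled_def by auto
  have "ptrace_second n n (outer \<psi>) $$ (a, a') = (\<Sum>b<n. \<psi> $ (a * n + b) * cnj (\<psi> $ (a' * n + b)))"
    using a a' dim pair_index_less[OF a] pair_index_less[OF a'] unfolding ptrace_second_def outer_def by simp
  then show ?thesis using a a' unfolding pt by (cases "a = a'") simp_all
qed

lemma maximally_entangled_cols:
  assumes me: "maximally_entangled n \<psi>" and b: "b < n" and b': "b' < n"
  shows "(\<Sum>a<n. \<psi> $ (a * n + b) * cnj (\<psi> $ (a * n + b'))) = (if b = b' then 1 / of_nat n else 0)"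
proof -
  have dim: "dim_vec \<psi> = n * n" and pt: "ptrace_first n n (outer \<psi>) = (1 / of_nat n) \<cdot>\<^sub>m 1\<^sub>m n"
    using me unfolding maximally_entangled_def by auto
  have "ptrace_first n n (outer \<psi>) $$ (b, b') = (\<Sum>a<n. \<psi> $ (a * n + b) * cnj (\<psi> $ (a * n + b')))"
    using b b' dim pair_index_less[OF _ b] pair_index_less[OF _ b'] unfolding ptrace_first_def outer_def by simp
  then show ?thesis using b b' unfolding pt by (cases "b = b'") simp_all
qed

lemma maximally_entangled_dim_pos: "maximally_entangled n \<psi> \<Longrightarrow> n > 0"
  unfolding maximally_entangled_def unit_vector_def by (cases "n = 0") auto

text \<open>For a maximally entangled input, tracing the purification over the output space and
  the Kraus labels of one channel leaves the Kraus overlap matrix of the other channel: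
  the Kraus label of Phi_i carries exactly the Jamiolkowski state of Phi_i.\<close>

lemma kraus_state_marginal_first:
  assumes L: "kraus_complete n m2 L" and me: "maximally_entangled n \<psi>"
  shows "marginal (\<lambda>r I s. kraus_state n K L \<psi> I r s) {..<n * n} {..<m2} = kraus_overlap n K"
proof (intro ext)
  fix r r'
  define \<eta> where "\<eta> = (\<lambda>x r b. \<Sum>a<n. \<psi> $ (a * n + b) * K r x a)"
  have W: "kraus_state n K L \<psi> I r s = (\<Sum>b<n. L s (I mod n) b * \<eta> (I div n) r b)" for I r s
    unfolding kraus_state_def \<eta>_def sum_distrib_left by (subst sum.swap) (simp add: mult_ac)
  have L': "(\<Sum>p\<in>{..<n} \<times> {..<m2}. L (snd p) (fst p) b * cnj (L (snd p) (fst p) b'))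
      = (if b = b' then 1 else 0)" if "b < n" "b' < n" for b b'
  proof -
    have "(\<Sum>p\<in>{..<n} \<times> {..<m2}. L (snd p) (fst p) b * cnj (L (snd p) (fst p) b'))
        = (\<Sum>y<n. \<Sum>s<m2. L s y b * cnj (L s y b'))"
      by (simp add: sum.cartesian_product case_prod_beta)
    also have "\<dots> = (\<Sum>s<m2. \<Sum>y<n. L s y b * cnj (L s y b'))" by (rule sum.swap)
    finally show ?thesis using L that unfolding kraus_complete_def by simp
  qed
  have inner: "(\<Sum>y<n. \<Sum>s<m2. (\<Sum>b<n. L s y b * \<eta> x r b) * cnj (\<Sum>b<n. L s y b * \<eta> x r' b))
      = 1 / of_nat n * (\<Sum>a<n. K r x a * cnj (K r' x a))" for x
  proof -
    have "(\<Sum>y<n. \<Sum>s<m2. (\<Sum>b<n. L s y b * \<eta> x r b) * cnj (\<Sum>b<n. L s y b * \<eta> x r' b))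
        = (\<Sum>b<n. \<eta> x r b * cnj (\<eta> x r' b))"
      using isometry_inner[where n=n and h="\<lambda>p b. L (snd p) (fst p) b", OF L', where F="\<eta> x r" and G="\<eta> x r'"] by (simp add: sum.cartesian_product case_prod_beta)
    also have "\<dots> = 1 / of_nat n * (\<Sum>a<n. K r x a * cnj (K r' x a))"
      unfolding \<eta>_def by (rule isometry_inner[OF maximally_entangled_rows[OF me]])
    finally show ?thesis .
  qed
  show "marginal (\<lambda>r I s. kraus_state n K L \<psi> I r s) {..<n * n} {..<m2} r r' = kraus_overlap n K r r'"
    unfolding marginal_def W sum_pair_index[of "\<lambda>x y. \<Sum>s<m2. (\<Sum>b<n. L s y b * \<eta> x r b) * cnj (\<Sum>b<n. L s y b * \<eta> x r' b)"]
    unfolding inner kraus_overlap_def by (simp add: sum_distrib_left)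
qed

lemma kraus_state_marginal_second:
  assumes K: "kraus_complete n m1 K" and me: "maximally_entangled n \<psi>"
  shows "marginal (\<lambda>s I r. kraus_state n K L \<psi> I r s) {..<n * n} {..<m1} = kraus_overlap n L"
proof (intro ext)
  fix s s'
  define \<xi> where "\<xi> = (\<lambda>y s a. \<Sum>b<n. \<psi> $ (a * n + b) * L s y b)"
  have W: "kraus_state n K L \<psi> I r s = (\<Sum>a<n. K r (I div n) a * \<xi> (I mod n) s a)" for I r s
    unfolding kraus_state_def \<xi>_def by (simp add: mult_ac)
  have K': "(\<Sum>p\<in>{..<n} \<times> {..<m1}. K (snd p) (fst p) a * cnj (K (snd p) (fst p) a'))
      = (if a = a' then 1 else 0)" if "a < n" "a' < n" for a a'
  proof -
    have "(\<Sum>p\<in>{..<n} \<times> {..<m1}. K (snd p) (fst p) a * cnj (K (snd p) (fst p) a'))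
        = (\<Sum>y<n. \<Sum>s<m1. K s y a * cnj (K s y a'))"
      by (simp add: sum.cartesian_product case_prod_beta)
    also have "\<dots> = (\<Sum>s<m1. \<Sum>y<n. K s y a * cnj (K s y a'))" by (rule sum.swap)
    finally show ?thesis using K that unfolding kraus_complete_def by simp
  qed
  have inner: "(\<Sum>x<n. \<Sum>r<m1. (\<Sum>a<n. K r x a * \<xi> y s a) * cnj (\<Sum>a<n. K r x a * \<xi> y s' a))
      = 1 / of_nat n * (\<Sum>b<n. L s y b * cnj (L s' y b))" for y
  proof -
    have "(\<Sum>x<n. \<Sum>r<m1. (\<Sum>a<n. K r x a * \<xi> y s a) * cnj (\<Sum>a<n. K r x a * \<xi> y s' a))
        = (\<Sum>a<n. \<xi> y s a * cnj (\<xi> y s' a))"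
      using isometry_inner[where n=n and h="\<lambda>p a. K (snd p) (fst p) a", OF K', where F="\<xi> y s" and G="\<xi> y s'"] by (simp add: sum.cartesian_product case_prod_beta)
    also have "\<dots> = 1 / of_nat n * (\<Sum>b<n. L s y b * cnj (L s' y b))"
      unfolding \<xi>_def by (rule isometry_inner[OF maximally_entangled_cols[OF me]])
    finally show ?thesis .
  qed
  have "marginal (\<lambda>s I r. kraus_state n K L \<psi> I r s) {..<n * n} {..<m1} s s'
      = (\<Sum>y<n. \<Sum>x<n. \<Sum>r<m1. (\<Sum>a<n. K r x a * \<xi> y s a) * cnj (\<Sum>a<n. K r x a * \<xi> y s' a))"
    unfolding marginal_def W sum_pair_index[of "\<lambda>x y. \<Sum>r<m1. (\<Sum>a<n. K r x a * \<xi> y s a) * cnj (\<Sum>a<n. K r x a * \<xi> y s' a)"]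
    by (rule sum.swap)
  then show "marginal (\<lambda>s I r. kraus_state n K L \<psi> I r s) {..<n * n} {..<m1} s s' = kraus_overlap n L s s'"
    unfolding inner kraus_overlap_def by (simp add: sum_distrib_left)
qed

lemma kraus_overlap_trace:
  assumes K: "kraus_complete n m K" and n: "n > 0"
  shows "(\<Sum>r<m. kraus_overlap n K r r) = 1"
proof -
  have "(\<Sum>r<m. kraus_overlap n K r r) = 1 / of_nat n * (\<Sum>r<m. \<Sum>x<n. \<Sum>a<n. K r x a * cnj (K r x a))"
    unfolding kraus_overlap_def by (simp add: sum_distrib_left)
  also have "\<dots> = 1 / of_nat n * (\<Sum>a<n. \<Sum>r<m. \<Sum>x<n. K r x a * cnj (K r x a))"
    by (subst sum_rotate3) (rule refl)
  also have "\<dots> = 1" using K n unfolding kraus_complete_def by simp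
  finally show ?thesis .
qed

lemma kraus_state_trace:
  assumes K: "kraus_complete n m1 K" and L: "kraus_complete n m2 L" and me: "maximally_entangled n \<psi>"
  shows "(\<Sum>I<n * n. marginal (kraus_state n K L \<psi>) {..<m1} {..<m2} I I) = 1"
  using marginal_traces(2)[where w="kraus_state n K L \<psi>" and A="{..<n * n}" and B="{..<m1}" and C="{..<m2}"]
    kraus_overlap_trace[OF L maximally_entangled_dim_pos[OF me]]
  unfolding kraus_state_marginal_second[OF K me] by simp

text \<open>The three marginals of the purification W have purities tr rho^2,
  tr (sigma^Phi1)^2 and tr (sigma^Phi2)^2, so the two-sided Audenaert inequality gives
  tr rho^2 <= 1 - |tr (sigma^Phi1)^2 - tr (sigma^Phi2)^2|; take -ln.\<close>

theorem mainTheorem3: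
  fixes n :: nat and \<Phi>1 \<Phi>2 :: "complex mat \<Rightarrow> complex mat" and \<psi> :: "complex vec"
  assumes "quantum_channel n \<Phi>1"
    and "quantum_channel n \<Phi>2"
    and "maximally_entangled n \<psi>"
  shows "- ln (1 - \<bar>exp (- renyi2_map n \<Phi>1) - exp (- renyi2_map n \<Phi>2)\<bar>)
           \<le> renyi2 (tensor_channel \<Phi>1 \<Phi>2 n (outer \<psi>))"
proof -
  have n: "n > 0" using assms(3) by (rule maximally_entangled_dim_pos)
  have \<psi>: "\<psi> \<in> carrier_vec (n * n)" using assms(3) unfolding maximally_entangled_def by blast
  obtain m1 K where kr1: "kraus_rep n \<Phi>1 m1 K" and K: "kraus_complete n m1 K"
    using channel_kraus[OF assms(1)] .
  obtain m2 L where kr2: "kraus_rep n \<Phi>2 m2 L" and L: "kraus_complete n m2 L"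
    using channel_kraus[OF assms(2)] .
  define W where "W = kraus_state n K L \<psi>"
  let ?P = "purity (marginal W {..<m1} {..<m2}) {..<n * n}"
  let ?P1 = "purity (marginal (\<lambda>r I s. W I r s) {..<n * n} {..<m2}) {..<m1}"
  let ?P2 = "purity (marginal (\<lambda>s I r. W I r s) {..<n * n} {..<m1}) {..<m2}"
  have tr: "(\<Sum>I<n * n. marginal W {..<m1} {..<m2} I I) = 1"
    unfolding W_def by (rule kraus_state_trace[OF K L assms(3)])
  then have "?P > 0" "?P1 > 0" "?P2 > 0"
    using marginal_traces[where w=W and A="{..<n * n}" and B="{..<m1}" and C="{..<m2}"]
    by (auto intro: marginal_purity_pos)
  moreover have "Re (ctrace (jamiolkowski n \<Phi>1 * jamiolkowski n \<Phi>1)) = ?P1"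
    "Re (ctrace (jamiolkowski n \<Phi>2 * jamiolkowski n \<Phi>2)) = ?P2"
    unfolding jamiolkowski_purity[OF kr1 n] jamiolkowski_purity[OF kr2 n] W_def
      kraus_state_marginal_first[OF L assms(3)] kraus_state_marginal_second[OF K assms(3)] by simp_all
  ultimately have P1: "exp (- renyi2_map n \<Phi>1) = ?P1" and P2: "exp (- renyi2_map n \<Phi>2) = ?P2"
    and P: "renyi2 (tensor_channel \<Phi>1 \<Phi>2 n (outer \<psi>)) = - ln ?P"
    unfolding renyi2_map_def renyi2_def W_def output_purity[OF kr1 kr2 \<psi>] by simp_all
  have "ln ?P \<le> ln (1 - \<bar>?P1 - ?P2\<bar>)"
    using audenaert_two_sided[OF tr] \<open>?P > 0\<close> by simp
  then show ?thesis unfolding P P1 P2 by simp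
qed

end
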